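(* If $\diamondsuit$ holds, then the space $\sigma(2^{\omega_1})=\{x\in 2^{\omega_1}:|x^{-1}(1)|<\omega\}$, as a subspace of the Cantor cube $2^{\omega_1}$, is not discretely discretely generated.
   Context: A space $X$ is discretely discretely generated (DDG) if for every set $A\subseteq X$ and every discrete set $D\subseteq\overline{A}$ there is a discrete set $E\subseteq A$ with $D\subseteq\overline{E}$. $\diamondsuit$ is Jensen's diamond principle. *)

theory Defs
  imports "HOL-Analysis.Analysis"
begin

definition discrete_in :: "'a topology \<Rightarrow> 'a set \<Rightarrow> bool" where
  "discrete_in X D \<longleftrightarrow> D \<subseteq> topspace X \<and>
     (\<forall>x\<in>D. \<exists>U. openin X U \<and> U \<inter> D = {x})"

definition DDG :: "'a topology \<Rightarrow> bool" where
  "DDG X \<longleftrightarrow> (\<forall>A D. A \<subseteq> topspace X \<longrightarrow> D \<subseteq> X closure_of A \<longrightarrow> discrete_in X D \<longrightarrow>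
      (\<exists>E. E \<subseteq> A \<and> discrete_in X E \<and> D \<subseteq> X closure_of E))"

text \<open>The ordinal omega_1 is represented by a well-ordered type which is uncountable
  but all of whose proper initial segments are countable.\<close>
definition is_omega1_type :: "'a::wellorder itself \<Rightarrow> bool" where
  "is_omega1_type _ \<longleftrightarrow> \<not> countable (UNIV :: 'a set) \<and> (\<forall>a::'a. countable {..<a})"

definition club :: "'a::wellorder set \<Rightarrow> bool" where
  "club C \<longleftrightarrow> (\<forall>a. \<exists>c\<in>C. a \<le> c) \<and>
     (\<forall>a. ({..<a} \<inter> C \<noteq> {} \<and> (\<forall>b<a. \<exists>c\<in>C. b < c \<and> c < a)) \<longrightarrow> a \<in> C)"

definition stationary :: "'a::wellorder set \<Rightarrow> bool" where
  "stationary S \<longleftrightarrow> (\<forall>C. club C \<longrightarrow> S \<inter> C \<noteq> {})"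

definition diamond :: "'a::wellorder itself \<Rightarrow> bool" where
  "diamond _ \<longleftrightarrow> (\<exists>A :: 'a \<Rightarrow> 'a set. (\<forall>a. A a \<subseteq> {..<a}) \<and>
      (\<forall>X :: 'a set. stationary {a. X \<inter> {..<a} = A a}))"

definition cantor_cube :: "('i \<Rightarrow> bool) topology" where
  "cantor_cube = product_topology (\<lambda>_. discrete_topology (UNIV :: bool set)) UNIV"

definition sigma_set :: "('i \<Rightarrow> bool) set" where
  "sigma_set = {x. finite {i. x i}}"

end

theory Submission
  imports Defs
begin

text \<open>Points of the sigma-product are identified with finite subsets of omega_1.
  Using diamond, choose by recursion for each limit l a countable family of finite subsets
  of l that is unhittable (every finite set misses one of its members), arranged so that
  the sets {l} \<union> q, q in the family at l, form a tree. Every point {l} with l a limit is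
  then in the closure of the set A of these tree sets, and these points form a discrete
  set D. Suppose E \<subseteq> A were discrete with D in its closure. Diamond guesses the codes of
  the members of E at stationarily many l, and at such l that are closed under a suitable
  bounding function the family at l consists exactly of the traces of E below l. So each
  such l lies in a member of E whose trace below l is again a member of E; pressing down
  fixes this trace for uncountably many l, which is impossible for a member of E isolated
  by a finite set.\<close>

section \<open>Cylinders in the Cantor cube and the sigma-product\<close>

definition cylinder :: "'i set \<Rightarrow> ('i \<Rightarrow> bool) \<Rightarrow> ('i \<Rightarrow> bool) set" where
  "cylinder F x = {y. \<forall>i\<in>F. y i = x i}"

lemma topspace_cantor_cube [simp]: "topspace cantor_cube = UNIV"
  by (simp add: cantor_cube_def PiE_UNIV_domain)

lemma cylinder_eq_PiE: "cylinder F x = (\<Pi>\<^sub>E i\<in>UNIV. if i \<in> F then {x i} else UNIV)"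
  unfolding cylinder_def PiE_UNIV_domain Pi_def by force

lemma openin_cantor_cube_cylinder:
  assumes "finite F"
  shows "openin cantor_cube (cylinder F x)"
  unfolding cylinder_eq_PiE cantor_cube_def
  by (intro product_topology_basis) (auto intro: finite_subset[OF _ assms])

lemma cantor_cube_open_contains_cylinder:
  assumes "openin cantor_cube U" and "x \<in> U"
  obtains F where "finite F" and "cylinder F x \<subseteq> U"
proof -
  obtain X where x: "x \<in> (\<Pi>\<^sub>E i\<in>UNIV. X i)"
    and fin: "finite {i. X i \<noteq> topspace (discrete_topology (UNIV :: bool set))}"
    and sub: "(\<Pi>\<^sub>E i\<in>UNIV. X i) \<subseteq> U"
    using product_topology_open_contains_basis[OF assms[unfolded cantor_cube_def]] by blast
  have "cylinder {i. X i \<noteq> UNIV} x \<subseteq> (\<Pi>\<^sub>E i\<in>UNIV. X i)"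
    using x unfolding cylinder_def PiE_UNIV_domain Pi_def
    by (smt (verit) UNIV_I mem_Collect_eq subsetI)
  with fin sub show thesis
    using that by force
qed

abbreviation sigma_space :: "('i \<Rightarrow> bool) topology" where
  "sigma_space \<equiv> subtopology cantor_cube sigma_set"

lemma in_closure_of_sigma_space:
  "x \<in> sigma_space closure_of A \<longleftrightarrow>
     x \<in> sigma_set \<and> (\<forall>F. finite F \<longrightarrow> (\<exists>y \<in> A \<inter> sigma_set. y \<in> cylinder F x))"
proof (intro iffI conjI allI impI)
  assume x: "x \<in> sigma_space closure_of A"
  then show "x \<in> sigma_set"
    using closure_of_subset_topspace by fastforce
  fix F :: "'a set"
  assume "finite F"
  then have "openin sigma_space (cylinder F x \<inter> sigma_set)"
    by (simp add: openin_cantor_cube_cylinder openin_subtopology_Int)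
  moreover have "x \<in> cylinder F x"
    by (simp add: cylinder_def)
  ultimately show "\<exists>y \<in> A \<inter> sigma_set. y \<in> cylinder F x"
    using x \<open>x \<in> sigma_set\<close> unfolding in_closure_of by blast
next
  assume x: "x \<in> sigma_set \<and> (\<forall>F. finite F \<longrightarrow> (\<exists>y \<in> A \<inter> sigma_set. y \<in> cylinder F x))"
  show "x \<in> sigma_space closure_of A"
    unfolding in_closure_of
  proof (intro conjI allI impI)
    show "x \<in> topspace sigma_space"
      using x by simp
    fix T
    assume "x \<in> T \<and> openin sigma_space T"
    then obtain U where "openin cantor_cube U" "x \<in> U" "T = U \<inter> sigma_set"
      by (auto simp: openin_subtopology)
    moreover obtain F where "finite F" "cylinder F x \<subseteq> U"
      using cantor_cube_open_contains_cylinder calculation by metis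
    ultimately show "\<exists>y. y \<in> A \<and> y \<in> T"
      using x by blast
  qed
qed

lemma discrete_in_sigma_space:
  "discrete_in sigma_space D \<longleftrightarrow>
     D \<subseteq> sigma_set \<and> (\<forall>x\<in>D. \<exists>F. finite F \<and> D \<inter> cylinder F x \<subseteq> {x})"
proof (intro iffI conjI ballI)
  assume D: "discrete_in sigma_space D"
  then show "D \<subseteq> sigma_set"
    by (simp add: discrete_in_def)
  fix x
  assume "x \<in> D"
  then obtain T where "openin sigma_space T" "T \<inter> D = {x}"
    using D by (auto simp: discrete_in_def)
  then obtain U where "openin cantor_cube U" "x \<in> U" "T = U \<inter> sigma_set"
    by (auto simp: openin_subtopology)
  moreover obtain F where "finite F" "cylinder F x \<subseteq> U"
    using cantor_cube_open_contains_cylinder calculation by metis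
  ultimately show "\<exists>F. finite F \<and> D \<inter> cylinder F x \<subseteq> {x}"
    using \<open>D \<subseteq> sigma_set\<close> \<open>T \<inter> D = {x}\<close> by blast
next
  assume D: "D \<subseteq> sigma_set \<and> (\<forall>x\<in>D. \<exists>F. finite F \<and> D \<inter> cylinder F x \<subseteq> {x})"
  show "discrete_in sigma_space D"
    unfolding discrete_in_def
  proof (intro conjI ballI)
    show "D \<subseteq> topspace sigma_space"
      using D by simp
    fix x
    assume "x \<in> D"
    then obtain F where "finite F" "D \<inter> cylinder F x \<subseteq> {x}"
      using D by blast
    moreover have "x \<in> cylinder F x"
      by (simp add: cylinder_def)
    ultimately have "openin sigma_space (cylinder F x \<inter> sigma_set)"
      and "cylinder F x \<inter> sigma_set \<inter> D = {x}"
      using D \<open>x \<in> D\<close> by (auto simp: openin_cantor_cube_cylinder openin_subtopology_Int)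
    then show "\<exists>U. openin sigma_space U \<and> U \<inter> D = {x}"
      by blast
  qed
qed

definition char_fun :: "'a set \<Rightarrow> 'a \<Rightarrow> bool" where
  "char_fun p = (\<lambda>i. i \<in> p)"

lemma char_fun_inject [simp]: "char_fun p = char_fun q \<longleftrightarrow> p = q"
  by (simp add: char_fun_def fun_eq_iff set_eq_iff)

lemma char_fun_in_sigma_set [simp]: "char_fun p \<in> sigma_set \<longleftrightarrow> finite p"
  by (simp add: sigma_set_def char_fun_def)

lemma char_fun_in_cylinder: "char_fun p \<in> cylinder F (char_fun q) \<longleftrightarrow> p \<inter> F = q \<inter> F"
  by (auto simp: cylinder_def char_fun_def)

definition isolated_family :: "'a set set \<Rightarrow> bool" where
  "isolated_family P \<longleftrightarrow> (\<forall>p\<in>P. \<exists>F. finite F \<and> (\<forall>q\<in>P. q \<inter> F = p \<inter> F \<longrightarrow> q = p))"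

lemma char_fun_in_closure_iff:
  "char_fun p \<in> sigma_space closure_of (char_fun ` P) \<longleftrightarrow>
     finite p \<and> (\<forall>F. finite F \<longrightarrow> (\<exists>q\<in>P. finite q \<and> q \<inter> F = p \<inter> F))"
proof -
  have "(\<exists>y \<in> char_fun ` P \<inter> sigma_set. y \<in> cylinder F (char_fun p)) \<longleftrightarrow>
      (\<exists>q\<in>P. char_fun q \<in> sigma_set \<and> char_fun q \<in> cylinder F (char_fun p))" for F
    by blast
  then show ?thesis
    by (simp add: in_closure_of_sigma_space char_fun_in_cylinder)
qed

lemma discrete_in_char_fun_image_iff:
  "discrete_in sigma_space (char_fun ` P) \<longleftrightarrow> (\<forall>p\<in>P. finite p) \<and> isolated_family P"
proof -
  have "char_fun ` P \<inter> cylinder F (char_fun p) \<subseteq> {char_fun p} \<longleftrightarrow>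
      (\<forall>q\<in>P. char_fun q \<in> cylinder F (char_fun p) \<longrightarrow> char_fun q = char_fun p)" for F p
    by blast
  then show ?thesis
    by (simp add: discrete_in_sigma_space isolated_family_def image_subset_iff char_fun_in_cylinder)
qed

lemma isolated_family_singletons: "isolated_family {{l} | l. Q l}"
  unfolding isolated_family_def
proof
  fix p
  assume "p \<in> {{l} | l. Q l}"
  then obtain l where p: "p = {l}"
    by blast
  have "q = p" if q: "q \<in> {{l} | l. Q l}" and eq: "q \<inter> p = p \<inter> p" for q
  proof -
    obtain m where "q = {m}"
      using q by blast
    moreover have "l \<in> q"
      using eq unfolding p by blast
    ultimately show ?thesis
      using p by simp
  qed
  moreover have "finite p"
    using p by simp
  ultimately show "\<exists>F. finite F \<and> (\<forall>q \<in> {{l} | l. Q l}. q \<inter> F = p \<inter> F \<longrightarrow> q = p)"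
    by blast
qed

lemma discrete_in_singletons: "discrete_in sigma_space (char_fun ` {{l} | l. Q l})"
proof -
  have "\<forall>p \<in> {{l} | l. Q l}. finite p"
    by auto
  then show ?thesis
    using isolated_family_singletons by (simp add: discrete_in_char_fun_image_iff)
qed

section \<open>Countable ordinals\<close>

definition succ :: "'a::wellorder \<Rightarrow> 'a" where
  "succ x = (LEAST y. x < y)"

definition limit :: "'a::wellorder \<Rightarrow> bool" where
  "limit l \<longleftrightarrow> (\<exists>b. b < l) \<and> (\<forall>b<l. succ b < l)"

definition next_limit :: "'a::wellorder \<Rightarrow> 'a" where
  "next_limit b = (LEAST l. limit l \<and> b < l)"

definition closure_points :: "('a::wellorder \<Rightarrow> 'a) \<Rightarrow> 'a set" where
  "closure_points h = {l. (\<exists>b. b < l) \<and> (\<forall>x<l. h x < l)}"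

text \<open>The n-th member of the family at a limit l is named by the ordinal code l n, which
  lies strictly between l and the next limit.\<close>

definition code :: "'a::wellorder \<Rightarrow> nat \<Rightarrow> 'a" where
  "code l n = (succ ^^ Suc n) l"

definition is_code :: "'a::wellorder \<Rightarrow> bool" where
  "is_code g \<longleftrightarrow> (\<exists>l n. limit l \<and> g = code l n)"

definition level :: "'a::wellorder \<Rightarrow> 'a" where
  "level g = (THE l. limit l \<and> (\<exists>n. g = code l n))"

definition index :: "'a::wellorder \<Rightarrow> nat" where
  "index g = (THE n. g = code (level g) n)"

lemma succ_least: "x < y \<Longrightarrow> succ x \<le> y"
  unfolding succ_def by (rule Least_le)

lemma finite_below_bounded:
  fixes l :: "'a::linorder"
  assumes "b < l" and "finite H"
  obtains m where "m < l" and "\<And>i. i \<in> H \<Longrightarrow> i < l \<Longrightarrow> i \<le> m"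
proof
  let ?M = "insert b {i \<in> H. i < l}"
  show "Max ?M < l"
    using assms by simp
  show "i \<le> Max ?M" if "i \<in> H" "i < l" for i
    using assms that by simp
qed

lemma closure_points_closed:
  assumes "{..<a} \<inter> closure_points h \<noteq> {}"
    and "\<forall>b<a. \<exists>c\<in>closure_points h. b < c \<and> c < (a::'a::wellorder)"
  shows "a \<in> closure_points h"
  unfolding closure_points_def
proof (intro CollectI conjI allI impI)
  show "\<exists>b. b < a"
    using assms(1) by auto
  fix x
  assume "x < a"
  then obtain c where "c \<in> closure_points h" "x < c" "c < a"
    using assms(2) by blast
  then show "h x < a"
    unfolding closure_points_def by auto
qed

locale omega1 =
  fixes w :: "'a::wellorder itself"
  assumes omega1: "is_omega1_type w"
begin

lemma countable_lessThan: "countable {..<a::'a}"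
  using omega1 by (simp add: is_omega1_type_def)

lemma countable_atMost: "countable {..a::'a}"
proof -
  have "{..a} = insert a {..<a}"
    by auto
  then show ?thesis
    using countable_lessThan by simp
qed

lemma countable_imp_bounded:
  assumes "countable (B :: 'a set)"
  shows "\<exists>u. \<forall>b\<in>B. b < u"
proof (rule ccontr)
  assume "\<nexists>u. \<forall>b\<in>B. b < u"
  then have "UNIV \<subseteq> (\<Union>b\<in>B. {..b})"
    by (fastforce simp: not_less)
  moreover have "countable (\<Union>b\<in>B. {..b})"
    using assms countable_atMost by auto
  ultimately show False
    using omega1 countable_subset by (auto simp: is_omega1_type_def)
qed

lemma uncountable_imp_unbounded:
  assumes "\<not> countable (U :: 'a set)"
  shows "\<exists>x\<in>U. b < x"
proof (rule ccontr)
  assume "\<not> (\<exists>x\<in>U. b < x)"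
  then have "U \<subseteq> {..b}"
    by (auto simp: not_less)
  then show False
    using assms countable_atMost countable_subset by blast
qed

lemma less_succ: "x < succ (x::'a)"
proof -
  obtain u where "x < u"
    using countable_imp_bounded[of "{x}"] by blast
  then show ?thesis
    unfolding succ_def by (rule LeastI)
qed

lemma closure_points_unbounded: "\<exists>c\<in>closure_points (h :: 'a \<Rightarrow> 'a). a \<le> c"
proof -
  have "\<exists>u. \<forall>x \<in> insert s (h ` {..s}). x < u" for s
    using countable_atMost by (intro countable_imp_bounded) simp
  then obtain nx where nx: "\<And>s x. x \<in> insert s (h ` {..s}) \<Longrightarrow> x < nx s"
    by metis
  define s where "s n = (nx ^^ n) a" for n
  obtain u where u: "\<forall>n. s n < u"
    using countable_imp_bounded[of "range s"] by auto
  define c where "c = (LEAST u. \<forall>n. s n < u)"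
  have "\<forall>n. s n < c"
    unfolding c_def using u by (rule LeastI)
  then have below_c: "s n < c" for n
    by blast
  have below_s: "\<exists>n. x \<le> s n" if "x < c" for x
  proof (rule ccontr)
    assume "\<nexists>n. x \<le> s n"
    then have "c \<le> x"
      unfolding c_def by (intro Least_le) (simp add: not_le)
    with that show False
      by simp
  qed
  have "c \<in> closure_points h"
    unfolding closure_points_def
  proof (intro CollectI conjI allI impI)
    show "\<exists>b. b < c"
      using below_c by blast
    fix x
    assume "x < c"
    then obtain n where "x \<le> s n"
      using below_s by blast
    then have "h x < s (Suc n)"
      using nx[of "h x" "s n"] by (simp add: s_def)
    then show "h x < c"
      using below_c[of "Suc n"] by simp
  qed
  moreover have "a \<le> c"
    using below_c[of 0] by (simp add: s_def)
  ultimately show ?thesis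
    by blast
qed

lemma club_closure_points: "club (closure_points (h :: 'a \<Rightarrow> 'a))"
  unfolding club_def using closure_points_closed closure_points_unbounded by blast

lemma limit_if_closure_point:
  assumes "\<And>x::'a. x < h x" and "l \<in> closure_points h"
  shows "limit l"
  unfolding limit_def
proof (intro conjI allI impI)
  show "\<exists>b. b < l"
    using assms(2) by (simp add: closure_points_def)
  fix b
  assume "b < l"
  then have "h b < l"
    using assms(2) by (simp add: closure_points_def)
  moreover have "succ b \<le> h b"
    using assms(1) succ_least by blast
  ultimately show "succ b < l"
    by simp
qed

lemma next_limit_spec: "limit (next_limit b) \<and> b < next_limit (b::'a)"
proof -
  obtain c where "c \<in> closure_points succ" "succ b \<le> c"
    using closure_points_unbounded by blast
  then have "limit c \<and> b < c"
    using limit_if_closure_point[OF less_succ] less_succ[of b] by auto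
  then show ?thesis
    unfolding next_limit_def by (rule LeastI)
qed

lemma pressing_down:
  assumes "stationary (S :: 'a set)"
    and regressive: "\<And>l. l \<in> S \<Longrightarrow> l \<in> closure_points h \<Longrightarrow> \<exists>g<l. R l g"
  shows "\<exists>g. \<not> countable {l \<in> S \<inter> closure_points h. R l g}"
proof (rule ccontr)
  let ?T = "S \<inter> closure_points h"
  assume "\<nexists>g. \<not> countable {l \<in> ?T. R l g}"
  then have fibre: "countable {l \<in> ?T. R l g}" for g
    by blast
  obtain f where f: "\<And>l. l \<in> ?T \<Longrightarrow> f l < l \<and> R l (f l)"
    using regressive by (metis IntE)
  have "{l \<in> ?T. f l \<le> b} \<subseteq> (\<Union>g\<in>{..b}. {l \<in> ?T. R l g})" for b
    using f by fastforce
  moreover have "countable (\<Union>g\<in>{..b}. {l \<in> ?T. R l g})" for b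
    by (intro countable_UN countable_atMost fibre)
  ultimately have "countable {l \<in> ?T. f l \<le> b}" for b
    by (rule countable_subset)
  then have "\<exists>u. \<forall>l \<in> {l \<in> ?T. f l \<le> b}. l < u" for b
    by (rule countable_imp_bounded)
  then obtain h' where h': "\<And>b l. l \<in> ?T \<Longrightarrow> f l \<le> b \<Longrightarrow> l < h' b"
    by (metis (mono_tags, lifting) mem_Collect_eq)
  obtain l where l: "l \<in> S" "l \<in> closure_points (\<lambda>b. max (h b) (h' b))"
    using assms(1) club_closure_points unfolding stationary_def by blast
  then have "l \<in> ?T"
    by (auto simp: closure_points_def)
  then have "h' (f l) < l"
    using f l(2) by (auto simp: closure_points_def)
  moreover have "l < h' (f l)"
    using h' \<open>l \<in> ?T\<close> by blast
  ultimately show False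
    by simp
qed

lemma strict_mono_succ_iter: "strict_mono (\<lambda>n. (succ ^^ n) (l::'a))"
  by (simp add: strict_mono_Suc_iff less_succ)

lemma less_code: "l < code (l::'a) n"
  using strict_mono_succ_iter[of l] unfolding code_def strict_mono_def
  by (metis funpow_0 zero_less_Suc)

lemma code_less_limit:
  assumes "limit m" and "l < (m::'a)"
  shows "code l n < m"
proof -
  have "(succ ^^ k) l < m" for k
    using assms by (induction k) (auto simp: limit_def)
  then show ?thesis
    using assms(1) by (simp add: code_def limit_def)
qed

lemma code_inject:
  assumes "limit l" and "limit m" and "code l n = code (m::'a) k"
  shows "l = m \<and> n = k"
proof -
  have "\<not> l < m" and "\<not> m < l"
    using assms code_less_limit less_code by (metis less_asym)+
  then have "l = m"
    by simp
  moreover have "n = k"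
    using assms(3) strict_mono_eq[OF strict_mono_succ_iter[of m], of "Suc n" "Suc k"] \<open>l = m\<close>
    by (simp add: code_def)
  ultimately show ?thesis
    by simp
qed

lemma level_code: "limit l \<Longrightarrow> level (code l n) = (l::'a)"
  unfolding level_def by (rule the_equality) (auto dest: code_inject)

lemma index_code: "limit (l::'a) \<Longrightarrow> index (code l n) = n"
  unfolding index_def level_code by (rule the_equality) (auto dest: code_inject)

lemma level_less: "is_code g \<Longrightarrow> level g < (g::'a)"
  using level_code less_code by (auto simp: is_code_def)

end

section \<open>A tree of finite sets guided by a diamond sequence\<close>

definition unhittable :: "'a set set \<Rightarrow> bool" where
  "unhittable Q \<longleftrightarrow> (\<forall>H. finite H \<longrightarrow> (\<exists>q\<in>Q. q \<inter> H = {}))"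

definition approaches_limits :: "'a::wellorder set set \<Rightarrow> bool" where
  "approaches_limits P \<longleftrightarrow> (\<forall>l F. limit l \<longrightarrow> finite F \<longrightarrow> (\<exists>r\<in>P. r \<inter> F = {l} \<inter> F))"

lemma approaches_limits_iff_closure:
  assumes "\<forall>p\<in>P. finite p"
  shows "approaches_limits P \<longleftrightarrow>
    (\<forall>l. limit l \<longrightarrow> char_fun {l} \<in> sigma_space closure_of char_fun ` P)"
proof -
  have "(\<exists>q\<in>P. finite q \<and> q \<inter> F = {l} \<inter> F) \<longleftrightarrow> (\<exists>r\<in>P. r \<inter> F = {l} \<inter> F)" for l F
    using assms by blast
  then show ?thesis
    by (simp add: approaches_limits_def char_fun_in_closure_iff)
qed

lemma unhittable_nonempty: "unhittable Q \<Longrightarrow> Q \<noteq> {}"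
  by (auto simp: unhittable_def)

locale diamond_seq = omega1 w for w :: "'a::wellorder itself" +
  fixes dseq :: "'a \<Rightarrow> 'a set"
  assumes dseq_below: "dseq a \<subseteq> {..<a}"
    and dseq_stationary: "stationary {a. X \<inter> {..<a} = dseq a}"
begin

text \<open>The guess dseq l is read as a set of codes of members of earlier families; it is
  adopted whenever the coded family is unhittable. The fallback {{}} is unhittable too.\<close>

definition fam_step :: "('a \<Rightarrow> 'a set set) \<Rightarrow> 'a \<Rightarrow> 'a set set" where
  "fam_step R l =
    (let Q = (\<lambda>g. insert (level g) (from_nat_into (R (level g)) (index g))) ` {g \<in> dseq l. is_code g}
     in if unhittable Q then Q else {{}})"

definition fam :: "'a \<Rightarrow> 'a set set" where
  "fam = wfrec {(x, y). x < y} fam_step"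

definition coded_set :: "'a \<Rightarrow> 'a set" where
  "coded_set g = insert (level g) (from_nat_into (fam (level g)) (index g))"

definition A_sets :: "'a set set" where
  "A_sets = {insert l q | l q. limit l \<and> q \<in> fam l}"

lemma fam_eq: "fam l = (let Q = coded_set ` {g \<in> dseq l. is_code g} in if unhittable Q then Q else {{}})"
proof -
  have "fam l = fam_step (cut fam {(x, y). x < y} l) l"
    unfolding fam_def by (rule wfrec) (rule wf)
  also have "\<dots> = fam_step fam l"
  proof -
    have "level g < l" if "g \<in> dseq l" "is_code g" for g
      using that level_less dseq_below by fastforce
    then have "(\<lambda>g. insert (level g) (from_nat_into (cut fam {(x, y). x < y} l (level g)) (index g)))
          ` {g \<in> dseq l. is_code g}
        = (\<lambda>g. insert (level g) (from_nat_into (fam (level g)) (index g))) ` {g \<in> dseq l. is_code g}"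
      by (intro image_cong) (simp_all add: cut_apply)
    then show ?thesis
      unfolding fam_step_def by simp
  qed
  finally show ?thesis
    by (simp add: fam_step_def coded_set_def)
qed

lemma unhittable_fam: "unhittable (fam l)"
  by (simp add: fam_eq Let_def unhittable_def)

lemma countable_fam: "countable (fam l)"
proof -
  have "countable {g \<in> dseq l. is_code g}"
    using dseq_below countable_lessThan by (blast intro: countable_subset)
  then show ?thesis
    by (simp add: fam_eq Let_def)
qed

lemma fam_cases:
  assumes "q \<in> fam l"
  shows "q = {} \<or> (\<exists>g\<in>dseq l. is_code g \<and> q = coded_set g)"
  using assms by (auto simp: fam_eq Let_def split: if_splits)

lemma coded_set_code: "limit l \<Longrightarrow> coded_set (code l n) = insert l (from_nat_into (fam l) n)"
  by (simp add: coded_set_def level_code index_code)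

lemma coded_setE:
  assumes "is_code g"
  obtains l q where "limit l" and "q \<in> fam l" and "coded_set g = insert l q" and "l < g"
proof -
  obtain l n where "limit l" and g: "g = code l n"
    using assms by (auto simp: is_code_def)
  moreover have "from_nat_into (fam l) n \<in> fam l"
    using unhittable_nonempty[OF unhittable_fam] by (rule from_nat_into)
  ultimately show thesis
    using that coded_set_code less_code by blast
qed

lemma ex_code_coded_set:
  assumes "limit l" and "q \<in> fam l"
  obtains n where "coded_set (code l n) = insert l q"
  using from_nat_into_surj[OF countable_fam assms(2)] coded_set_code[OF assms(1)] by metis

lemma fam_member_below:
  "q \<in> fam l \<Longrightarrow> finite q \<and> q \<subseteq> {..<l}"
proof (induction l arbitrary: q rule: less_induct)
  case (less l)
  from fam_cases[OF less.prems] show ?case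
  proof
    assume "\<exists>g\<in>dseq l. is_code g \<and> q = coded_set g"
    then obtain g where "g \<in> dseq l" "is_code g" "q = coded_set g"
      by blast
    moreover obtain l' q' where "q' \<in> fam l'" "coded_set g = insert l' q'" "l' < g"
      using coded_setE[OF \<open>is_code g\<close>] by blast
    moreover have "l' < l"
      using \<open>g \<in> dseq l\<close> \<open>l' < g\<close> dseq_below by fastforce
    ultimately show ?thesis
      using less.IH[of l' q'] by (auto intro: order.strict_trans)
  qed simp
qed

lemma fam_restrict:
  "q \<in> fam l \<Longrightarrow> m \<in> insert l q \<Longrightarrow> insert l q \<inter> {..<m} \<in> fam m"
proof (induction l arbitrary: q rule: less_induct)
  case (less l)
  have below: "q \<subseteq> {..<l}"
    using fam_member_below[OF less.prems(1)] by blast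
  show ?case
  proof (cases "m = l")
    case True
    moreover have "insert l q \<inter> {..<l} = q"
      using below by auto
    ultimately show ?thesis
      using less.prems(1) by simp
  next
    case False
    then have "m \<in> q"
      using less.prems(2) by simp
    then obtain g where g: "g \<in> dseq l" "is_code g" "q = coded_set g"
      using fam_cases[OF less.prems(1)] by blast
    obtain l' q' where "q' \<in> fam l'" "q = insert l' q'" "l' < g"
      using coded_setE[OF g(2)] g(3) by metis
    moreover have "l' < l"
      using g(1) dseq_below \<open>l' < g\<close> by fastforce
    moreover have "m < l"
      using \<open>m \<in> q\<close> below by blast
    ultimately show ?thesis
      using less.IH[of l' q'] \<open>m \<in> q\<close> by (auto simp: Int_insert_left)
  qed
qed

lemma A_setsE:
  assumes "p \<in> A_sets"
  obtains l q where "limit l" and "q \<in> fam l" and "p = insert l q"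
  using assms by (auto simp: A_sets_def)

lemma finite_A_sets: "p \<in> A_sets \<Longrightarrow> finite p"
  by (metis A_setsE fam_member_below finite_insert)

lemma approaches_limits_A_sets: "approaches_limits A_sets"
  unfolding approaches_limits_def
proof (intro allI impI)
  fix l :: 'a and F :: "'a set"
  assume "limit l" and "finite F"
  then obtain q where "q \<in> fam l" and "q \<inter> F = {}"
    using unhittable_fam unfolding unhittable_def by blast
  then show "\<exists>r\<in>A_sets. r \<inter> F = {l} \<inter> F"
    using \<open>limit l\<close> by (intro bexI[of _ "insert l q"]) (auto simp: A_sets_def)
qed

end

section \<open>Isolated families cannot approach every limit\<close>

locale approaching_family = diamond_seq w dseq for w :: "'a::wellorder itself" and dseq +
  fixes P :: "'a set set"
  assumes P_sub: "P \<subseteq> A_sets"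
    and P_approaches: "approaches_limits P"
begin

definition P_codes :: "'a set" where
  "P_codes = {g. is_code g \<and> coded_set g \<in> P}"

definition guessed :: "'a set" where
  "guessed = {a. P_codes \<inter> {..<a} = dseq a}"

definition witness :: "'a \<Rightarrow> 'a set \<Rightarrow> 'a set" where
  "witness v H = (SOME r. r \<in> P \<and> v \<in> r \<and> r \<inter> H = {})"

definition bound_set :: "'a \<Rightarrow> 'a set" where
  "bound_set b = insert (next_limit b)
     (if limit b then \<Union>H \<in> {H. finite H \<and> H \<subseteq> {..<b}}. witness b H else {})"

definition bound :: "'a \<Rightarrow> 'a" where
  "bound b = (SOME u. \<forall>x\<in>bound_set b. x < u)"

lemma witness_spec:
  assumes "limit v" and "finite H" and "H \<subseteq> {..<v}"
  shows "witness v H \<in> P \<and> v \<in> witness v H \<and> witness v H \<inter> H = {}"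
proof -
  obtain r where "r \<in> P" and "r \<inter> insert v H = {v} \<inter> insert v H"
    using P_approaches assms(1,2) unfolding approaches_limits_def by blast
  then have "r \<in> P \<and> v \<in> r \<and> r \<inter> H = {}"
    using assms(3) by auto
  then show ?thesis
    unfolding witness_def by (rule someI)
qed

lemma less_bound: "x \<in> bound_set b \<Longrightarrow> x < bound b"
proof -
  have "countable (witness b H)" if "limit b" "finite H" "H \<subseteq> {..<b}" for H
    using witness_spec[OF that] P_sub finite_A_sets by (blast intro: countable_finite)
  then have "countable (bound_set b)"
    using countable_Collect_finite_subset[OF countable_lessThan]
    by (auto simp: bound_set_def intro: countable_UN)
  then have "\<forall>x\<in>bound_set b. x < bound b"
    unfolding bound_def by (rule someI_ex[OF countable_imp_bounded])
  then show "x \<in> bound_set b \<Longrightarrow> x < bound b"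
    by blast
qed

lemma limit_if_closure_point_bound: "l \<in> closure_points bound \<Longrightarrow> limit l"
  using next_limit_spec less_bound by (intro limit_if_closure_point) (auto simp: bound_set_def intro: less_trans)

lemma witness_below_closure_point:
  assumes "l \<in> closure_points bound" and "v < l" and "limit v"
    and "finite H" and "H \<subseteq> {..<v}"
  shows "witness v H \<subseteq> {..<l}"
proof
  fix x
  assume "x \<in> witness v H"
  then have "x \<in> bound_set v"
    using assms(3-5) unfolding bound_set_def by (simp add: UN_iff) blast
  then have "x < bound v"
    by (rule less_bound)
  also have "bound v < l"
    using assms(1,2) by (simp add: closure_points_def)
  finally show "x \<in> {..<l}"
    by simp
qed

lemma coded_set_image_if_below:
  assumes "r \<in> P" and "limit l" and "r \<subseteq> {..<l}"
  shows "r \<in> coded_set ` (P_codes \<inter> {..<l})"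
proof -
  obtain l' q where l': "limit l'" "q \<in> fam l'" and r: "r = insert l' q"
    using P_sub assms(1) by (blast elim: A_setsE)
  obtain n where n: "coded_set (code l' n) = r"
    using ex_code_coded_set[OF l'] r by metis
  have "code l' n < l"
    using code_less_limit[OF assms(2)] assms(3) r by blast
  moreover have "code l' n \<in> P_codes"
    using l'(1) n assms(1) by (auto simp: P_codes_def is_code_def)
  ultimately show ?thesis
    using n by blast
qed

text \<open>A finite H is avoided by the witness through a limit v above H \<inter> {..<l};
  closure under bound keeps both v and that witness below l.\<close>

lemma unhittable_coded_below:
  assumes l: "l \<in> closure_points bound"
  shows "unhittable (coded_set ` (P_codes \<inter> {..<l}))"
  unfolding unhittable_def
proof (intro allI impI)
  fix H :: "'a set"
  assume "finite H"
  have "limit l"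
    using l by (rule limit_if_closure_point_bound)
  then obtain b where "b < l"
    by (auto simp: limit_def)
  then obtain m where "m < l" and m: "\<And>i. i \<in> H \<Longrightarrow> i < l \<Longrightarrow> i \<le> m"
    using finite_below_bounded \<open>finite H\<close> by blast
  define v where "v = next_limit m"
  have v: "limit v" "m < v"
    using next_limit_spec v_def by auto
  have "v < bound m"
    using less_bound by (simp add: bound_set_def v_def)
  also have "bound m < l"
    using l \<open>m < l\<close> by (simp add: closure_points_def)
  finally have "v < l" .
  define r where "r = witness v (H \<inter> {..<v})"
  have r: "r \<in> P" "r \<inter> (H \<inter> {..<v}) = {}"
    using witness_spec[OF v(1)] \<open>finite H\<close> r_def by auto
  have r_below: "r \<subseteq> {..<l}"
    unfolding r_def using witness_below_closure_point[OF l \<open>v < l\<close> v(1)] \<open>finite H\<close> by blast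
  have "r \<inter> H = {}"
  proof -
    have "i \<in> H \<inter> {..<v}" if "i \<in> r" "i \<in> H" for i
      using that r_below m[of i] v(2) by fastforce
    with r(2) show ?thesis
      by blast
  qed
  moreover have "r \<in> coded_set ` (P_codes \<inter> {..<l})"
    using coded_set_image_if_below[OF r(1) \<open>limit l\<close> r_below] .
  ultimately show "\<exists>q \<in> coded_set ` (P_codes \<inter> {..<l}). q \<inter> H = {}"
    by blast
qed

lemma fam_guessed:
  assumes "l \<in> guessed" and "l \<in> closure_points bound"
  shows "fam l = coded_set ` (P_codes \<inter> {..<l})"
proof -
  have "{g \<in> dseq l. is_code g} = P_codes \<inter> {..<l}"
    using assms(1) by (auto simp: guessed_def P_codes_def)
  then show ?thesis
    using unhittable_coded_below[OF assms(2)] by (simp add: fam_eq)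
qed

lemma trace_is_coded:
  assumes "l \<in> guessed" and "l \<in> closure_points bound"
  shows "\<exists>g<l. g \<in> P_codes \<and> (\<exists>r\<in>P. l \<in> r \<and> r \<inter> {..<l} = coded_set g)"
proof -
  have "limit l"
    using assms(2) by (rule limit_if_closure_point_bound)
  then obtain r where r: "r \<in> P" "l \<in> r"
    using witness_spec[of l "{}"] by blast
  then obtain l' q where "q \<in> fam l'" "r = insert l' q"
    using P_sub by (blast elim: A_setsE)
  then have "r \<inter> {..<l} \<in> fam l"
    using fam_restrict r(2) by blast
  then show ?thesis
    using fam_guessed[OF assms] r by blast
qed

text \<open>Pressing down yields one member of P that is the trace below l of members of P
  through l for uncountably many l; a finite set isolating it is bounded, and a level
  above that bound gives a contradiction.\<close>

lemma not_isolated_family: "\<not> isolated_family P"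
proof
  assume isolated: "isolated_family P"
  have "stationary guessed"
    unfolding guessed_def by (rule dseq_stationary)
  then obtain g where uncountable:
    "\<not> countable {l \<in> guessed \<inter> closure_points bound.
        g \<in> P_codes \<and> (\<exists>r\<in>P. l \<in> r \<and> r \<inter> {..<l} = coded_set g)}"
    using pressing_down[where R = "\<lambda>l g. g \<in> P_codes \<and> (\<exists>r\<in>P. l \<in> r \<and> r \<inter> {..<l} = coded_set g)"]
      trace_is_coded by blast
  have "g \<in> P_codes"
  proof (rule ccontr)
    assume "g \<notin> P_codes"
    with uncountable show False
      by simp
  qed
  then obtain F where "finite F" and F: "\<And>q. q \<in> P \<Longrightarrow> q \<inter> F = coded_set g \<inter> F \<Longrightarrow> q = coded_set g"
    using isolated by (auto simp: isolated_family_def P_codes_def)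
  obtain u where u: "\<forall>i\<in>F. i < u"
    using countable_imp_bounded[OF countable_finite[OF \<open>finite F\<close>]] by blast
  obtain l r where "u < l" "r \<in> P" "l \<in> r" and trace: "r \<inter> {..<l} = coded_set g"
    using uncountable_imp_unbounded[OF uncountable, of u] by blast
  then have "r \<inter> F = coded_set g \<inter> F"
    using u by fastforce
  then have "r = coded_set g"
    using F \<open>r \<in> P\<close> by blast
  with trace \<open>l \<in> r\<close> show False
    by blast
qed

end

context diamond_seq
begin

lemma not_DDG_sigma_space: "\<not> DDG (sigma_space :: ('a \<Rightarrow> bool) topology)"
proof
  assume DDG: "DDG (sigma_space :: ('a \<Rightarrow> bool) topology)"
  define D where "D = char_fun ` {{l} | l :: 'a. limit l}"
  have finite: "\<forall>p\<in>A_sets. finite p"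
    using finite_A_sets by blast
  then have "\<forall>l. limit l \<longrightarrow> char_fun {l} \<in> sigma_space closure_of char_fun ` A_sets"
    using approaches_limits_A_sets by (simp add: approaches_limits_iff_closure)
  then have D_closure: "D \<subseteq> sigma_space closure_of char_fun ` A_sets"
    unfolding D_def by blast
  have D_discrete: "discrete_in sigma_space D"
    unfolding D_def by (rule discrete_in_singletons)
  have "char_fun ` A_sets \<subseteq> topspace sigma_space"
    using finite by auto
  then obtain E where E: "E \<subseteq> char_fun ` A_sets" "discrete_in sigma_space E"
      "D \<subseteq> sigma_space closure_of E"
    using DDG[unfolded DDG_def, rule_format, OF _ D_closure D_discrete] by blast
  define P where "P = {p \<in> A_sets. char_fun p \<in> E}"
  have "P \<subseteq> A_sets"
    by (simp add: P_def)
  have E_eq: "E = char_fun ` P"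
    using E(1) unfolding P_def by blast
  have "\<forall>l. limit l \<longrightarrow> char_fun {l} \<in> sigma_space closure_of char_fun ` P"
    using E(3) unfolding D_def E_eq by blast
  moreover have "\<forall>p\<in>P. finite p"
    using \<open>P \<subseteq> A_sets\<close> finite by blast
  ultimately have "approaches_limits P"
    by (simp add: approaches_limits_iff_closure)
  with \<open>P \<subseteq> A_sets\<close> interpret approaching_family w dseq P
    by unfold_locales
  have "isolated_family P"
    using E(2) by (simp add: E_eq discrete_in_char_fun_image_iff)
  with not_isolated_family show False
    by blast
qed

end

theorem theorem6p10:
  fixes w1 :: "'a::wellorder itself"
  assumes "is_omega1_type w1"
      and "diamond w1"
  shows "\<not> DDG (subtopology (cantor_cube :: ('a \<Rightarrow> bool) topology) sigma_set)"
proof -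
  obtain dseq :: "'a \<Rightarrow> 'a set" where
    "\<forall>a. dseq a \<subseteq> {..<a}" and "\<forall>X. stationary {a. X \<inter> {..<a} = dseq a}"
    using assms(2) unfolding diamond_def by blast
  then interpret diamond_seq w1 dseq
    using assms(1) by unfold_locales blast+
  show ?thesis
    by (rule not_DDG_sigma_space)
qed

end
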